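(* Let $g:\mathbb{C}\to\mathbb{C}$ be holomorphic at $0$ with $g(0)=0$ and $g'(0)\neq 0$, let $\varphi:\mathbb{N}\to\mathbb{C}\setminus\{0\}$, and let $a\neq 0$ be a real number. Let $(P_n(x))_{n\ge 0}$ be a sequence of Appell polynomials of type $(g,\varphi)$ with generating function $f$, i.e. $f$ is holomorphic at $0$, $f(0)\neq 0$, and $$\sum_{n\ge 0}P_n(x)\frac{t^n}{\varphi(0)\varphi(1)\cdots\varphi(n)}=f(t)e^{x g(t)}$$ for all $x$ and all $t$ near $0$. Then $P_n(a-x)=(-1)^nP_n(x)$ for all $n\ge0$ and all $x$ if and only if both $g$ and the function $t\mapsto \left(e^{a g(t)}-1\right)f(t)$ are odd.
   Context: Here $\mathbb{N}=\{0,1,2,\dots\}$. A sequence of Appell polynomials of type $(g,\varphi)$ is a sequence of polynomials for which some $f$ holomorphic at $0$ with $f(0)\ne0$ satisfies the displayed identity. *)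

theory Defs
  imports "HOL-Analysis.Analysis" "HOL-Computational_Algebra.Polynomial"
begin

definition odd_near_0 :: "(complex \<Rightarrow> complex) \<Rightarrow> bool" where
  "odd_near_0 h \<longleftrightarrow> (\<forall>\<^sub>F t in nhds 0. h (- t) = - h t)"

definition appell_gen :: "(complex \<Rightarrow> complex) \<Rightarrow> (nat \<Rightarrow> complex) \<Rightarrow> (complex \<Rightarrow> complex)
    \<Rightarrow> (nat \<Rightarrow> complex poly) \<Rightarrow> bool" where
  "appell_gen g \<phi> f P \<longleftrightarrow> f analytic_on {0} \<and> f 0 \<noteq> 0 \<and>
     (\<forall>x. \<forall>\<^sub>F t in nhds 0.
        (\<lambda>n. poly (P n) x * t ^ n / (\<Prod>k\<le>n. \<phi> k)) sums (f t * exp (x * g t)))"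

end

theory Submission
  imports Defs "HOL-Complex_Analysis.Cauchy_Integral_Formula"
begin

text \<open>
  Comparing coefficients of the generating function, the symmetry
  P_n(a - x) = (-1)^n P_n(x) is equivalent to the functional equation
  f(t) exp((a - x) g(t)) = f(-t) exp(x g(-t)) near 0, for every x. Its instances x = 0 and
  x = 1 give f(-t) = exp(a g(t)) f(t) and exp(g(t) + g(-t)) = 1; as g(t) is small, the latter
  forces g to be odd, and then the former says exactly that (exp(a g) - 1) f is odd.
  Conversely, oddness of (exp(a g) - 1) f gives back f(-t) = exp(a g(t)) f(t) wherever
  exp(a g(t)) \<noteq> 1, which holds for small t \<noteq> 0 because g'(0) \<noteq> 0.
\<close>

lemma exp_eq_1_small_imp_eq_0:
  fixes z :: complex
  assumes "exp z = 1" and "norm z < 2 * pi"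
  shows "z = 0"
proof -
  from assms(1) obtain n :: int where re: "Re z = 0" and im: "Im z = of_int (2 * n) * pi"
    unfolding exp_eq_1 by blast
  have "\<bar>real_of_int n\<bar> * (2 * pi) = \<bar>Im z\<bar>"
    using im by (simp add: abs_mult)
  also have "\<dots> < 2 * pi"
    using abs_Im_le_cmod[of z] assms(2) by linarith
  finally have "n = 0"
    by simp
  with re im show ?thesis
    by (simp add: complex_eqI)
qed

lemma eventually_nhds_0_uminus:
  fixes P :: "'a::real_normed_vector \<Rightarrow> bool"
  assumes "eventually P (nhds 0)"
  shows "\<forall>\<^sub>F t in nhds 0. P (- t)"
  using assms by (metis eventually_filtermap filtermap_nhds_minus minus_zero)

lemma eventually_nhds_of_at:
  assumes "eventually P (at z)" and "P z"
  shows "eventually P (nhds z)"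
  using assms unfolding eventually_at_filter by (auto elim!: eventually_mono)

lemma isCont_imp_eventually_norm_less:
  fixes g :: "'a::t2_space \<Rightarrow> 'b::real_normed_vector"
  assumes "isCont g z" and "g z = 0" and "e > 0"
  shows "\<forall>\<^sub>F t in nhds z. norm (g t) < e"
proof (rule eventually_nhds_of_at)
  have "(g \<longlongrightarrow> 0) (at z)"
    using assms(1,2) by (simp add: isCont_def)
  from tendstoD[OF this \<open>e > 0\<close>] show "\<forall>\<^sub>F t in at z. norm (g t) < e"
    by simp
qed (use assms in simp)

lemma isCont_imp_eventually_nonzero:
  fixes f :: "'a::t2_space \<Rightarrow> 'b::{t2_space,zero}"
  assumes "isCont f z" and "f z \<noteq> 0"
  shows "\<forall>\<^sub>F t in nhds z. f t \<noteq> 0"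
proof (rule eventually_nhds_of_at)
  show "\<forall>\<^sub>F t in at z. f t \<noteq> 0"
    using tendsto_imp_eventually_ne[OF assms(1)[unfolded isCont_def] assms(2)] .
qed (use assms in simp)

lemma DERIV_nonzero_imp_eventually_nonzero:
  fixes g :: "'a::real_normed_field \<Rightarrow> 'a"
  assumes "(g has_field_derivative D) (at z)" and "g z = 0" and "D \<noteq> 0"
  shows "\<forall>\<^sub>F t in at z. g t \<noteq> 0"
proof -
  have "((\<lambda>t. (g t - g z) / (t - z)) \<longlongrightarrow> D) (at z)"
    using assms(1) by (simp add: has_field_derivative_iff)
  from tendsto_imp_eventually_ne[OF this assms(3)] show ?thesis
    by (rule eventually_mono) (use assms(2) in auto)
qed

lemma powser_coeffs_unique:
  fixes c d :: "nat \<Rightarrow> complex"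
  assumes "\<forall>\<^sub>F t in nhds 0. (\<lambda>n. c n * t ^ n) sums h t"
    and "\<forall>\<^sub>F t in nhds 0. (\<lambda>n. d n * t ^ n) sums h t"
  shows "c = d"
proof
  fix m
  define e where "e n = c n - d n" for n
  have "\<forall>\<^sub>F t in nhds 0. (\<lambda>n. e n * t ^ n) sums 0"
    using assms
  proof eventually_elim
    case (elim t)
    from sums_diff[OF elim] show ?case
      by (simp add: e_def left_diff_distrib)
  qed
  then obtain r where "r > 0" and e_sums: "\<And>t. norm t < r \<Longrightarrow> (\<lambda>n. e n * t ^ n) sums 0"
    unfolding eventually_nhds_metric by (auto simp: dist_norm)
  have "e m = 0"
  proof (rule ccontr)
    \<comment> \<open>otherwise the zero function would have an isolated zero at 0\<close>
    assume "e m \<noteq> 0"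
    moreover have "e 0 = 0"
      using e_sums[of 0] \<open>r > 0\<close> by simp
    ultimately have "m > 0"
      by (cases m) auto
    show False
    proof (rule powser_0_nonzero[of r 0 e "\<lambda>_. 0" m])
      fix s :: real
      assume "s > 0" and nonzero: "\<And>z::complex. z \<in> cball 0 s - {0} \<Longrightarrow> (0::complex) \<noteq> 0"
      show False
        using nonzero[of "complex_of_real s"] \<open>s > 0\<close> by simp
    qed (use \<open>r > 0\<close> e_sums \<open>e m \<noteq> 0\<close> \<open>m > 0\<close> in auto)
  qed
  then show "c m = d m"
    by (simp add: e_def)
qed

lemma appell_reflection_iff_functional_equation:
  assumes "appell_gen g \<phi> f P" and "\<forall>n. \<phi> n \<noteq> 0"
  shows "(\<forall>n x. poly (P n) (c - x) = (-1) ^ n * poly (P n) x) \<longleftrightarrow>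
    (\<forall>x. \<forall>\<^sub>F t in nhds 0. f t * exp ((c - x) * g t) = f (- t) * exp (x * g (- t)))"
proof -
  define a where "a x n = poly (P n) x / (\<Prod>k\<le>n. \<phi> k)" for x n
  have reflection_iff: "poly (P n) (c - x) = (-1) ^ n * poly (P n) x \<longleftrightarrow>
      a (c - x) n = (-1) ^ n * a x n" for n x
    using assms(2) by (simp add: a_def)
  have gen: "\<forall>\<^sub>F t in nhds 0. (\<lambda>n. a x n * t ^ n) sums (f t * exp (x * g t))" for x
    using assms(1) unfolding appell_gen_def a_def by (simp add: mult.commute times_divide_eq_left)
  have gen_minus: "\<forall>\<^sub>F t in nhds 0.
      (\<lambda>n. ((-1) ^ n * a x n) * t ^ n) sums (f (- t) * exp (x * g (- t)))" for x
  proof -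
    have "(\<lambda>n. a x n * (- t) ^ n) = (\<lambda>n. ((-1) ^ n * a x n) * t ^ n)" for t :: complex
      by (simp add: power_minus[of t] mult_ac)
    then show ?thesis
      using eventually_nhds_0_uminus[OF gen[of x]] by simp
  qed
  show ?thesis
    unfolding reflection_iff
  proof
    assume reflection: "\<forall>n x. a (c - x) n = (-1) ^ n * a x n"
    show "\<forall>x. \<forall>\<^sub>F t in nhds 0. f t * exp ((c - x) * g t) = f (- t) * exp (x * g (- t))"
    proof
      fix x
      show "\<forall>\<^sub>F t in nhds 0. f t * exp ((c - x) * g t) = f (- t) * exp (x * g (- t))"
        using gen[of "c - x"] gen_minus[of x]
        by eventually_elim (simp add: reflection sums_unique2)
    qed
  next
    assume functional_equation:
      "\<forall>x. \<forall>\<^sub>F t in nhds 0. f t * exp ((c - x) * g t) = f (- t) * exp (x * g (- t))"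
    show "\<forall>n x. a (c - x) n = (-1) ^ n * a x n"
    proof (intro allI)
      fix n x
      have "\<forall>\<^sub>F t in nhds 0. (\<lambda>n. ((-1) ^ n * a x n) * t ^ n) sums (f t * exp ((c - x) * g t))"
        using gen_minus[of x] functional_equation[rule_format, of x]
        by eventually_elim simp
      from powser_coeffs_unique[OF gen[of "c - x"] this]
      show "a (c - x) n = (-1) ^ n * a x n"
        by (rule fun_cong)
    qed
  qed
qed

lemma exp_identities_imp_eq_minus:
  fixes c z w F F' :: complex
  assumes "F * exp (c * z) = F'" and "F * exp ((c - 1) * z) = F' * exp w"
    and "F \<noteq> 0" and "norm z < pi" and "norm w < pi"
  shows "w = - z"
proof -
  have split: "exp ((c - 1) * z) = exp (c * z) * exp (- z)"
    by (simp add: left_diff_distrib exp_diff exp_minus divide_inverse)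
  have "F' * exp (- z) = F' * exp w"
    using assms(2) unfolding split assms(1)[symmetric] by (simp only: mult.assoc)
  moreover have "F' \<noteq> 0"
    using assms(1,3) by auto
  ultimately have "exp (- z) = exp w"
    by simp
  then have "exp (w + z) = exp (- z) * exp z"
    by (simp add: exp_add)
  also have "\<dots> = 1"
    by (simp add: exp_minus)
  finally have "exp (w + z) = 1" .
  moreover have "norm (w + z) < 2 * pi"
    using norm_triangle_ineq[of w z] assms(4,5) by simp
  ultimately have "w + z = 0"
    by (rule exp_eq_1_small_imp_eq_0)
  then show ?thesis
    by (simp add: eq_neg_iff_add_eq_0)
qed

lemma odd_factor_imp_reflection:
  fixes c z F F' :: complex
  assumes "(exp (- (c * z)) - 1) * F' = - ((exp (c * z) - 1) * F)" and "exp (c * z) \<noteq> 1"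
  shows "F' = exp (c * z) * F"
proof -
  have "exp (c * z) * exp (- (c * z)) = 1"
    by (simp add: exp_add[symmetric])
  then have "(1 - exp (c * z)) * F' = (1 - exp (c * z)) * (exp (c * z) * F)"
    using arg_cong[OF assms(1), of "\<lambda>y. exp (c * z) * y"] by (simp add: algebra_simps)
  with assms(2) show ?thesis
    by simp
qed

lemma reflection_imp_odd_factor:
  fixes c z F :: complex
  shows "(exp (- (c * z)) - 1) * (exp (c * z) * F) = - ((exp (c * z) - 1) * F)"
proof -
  have "exp (- (c * z)) * exp (c * z) = 1"
    by (simp add: exp_add[symmetric])
  then show ?thesis
    by (simp add: algebra_simps)
qed

lemma reflection_imp_functional_equation:
  fixes c x z F :: complex
  shows "F * exp ((c - x) * z) = (exp (c * z) * F) * exp (- (x * z))"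
proof -
  have "exp ((c - x) * z) = exp (c * z) * exp (- (x * z))"
    by (simp add: left_diff_distrib exp_diff exp_minus divide_inverse)
  then show ?thesis
    by (simp only: mult_ac)
qed

lemma functional_equation_imp_odd:
  assumes "isCont g 0" and "g 0 = 0" and "\<forall>\<^sub>F t in nhds 0. f t \<noteq> 0"
    and "\<forall>x. \<forall>\<^sub>F t in nhds 0. f t * exp ((c - x) * g t) = f (- t) * exp (x * g (- t))"
  shows "odd_near_0 g \<and> odd_near_0 (\<lambda>t. (exp (c * g t) - 1) * f t)"
proof -
  have g_small: "\<forall>\<^sub>F t in nhds 0. norm (g t) < pi"
    using isCont_imp_eventually_norm_less[OF assms(1,2) pi_gt_zero] .
  have "\<forall>\<^sub>F t in nhds 0. g (- t) = - g t \<and> f (- t) = exp (c * g t) * f t"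
    using assms(4)[rule_format, of 0] assms(4)[rule_format, of 1] assms(3)
      g_small eventually_nhds_0_uminus[OF g_small]
  proof eventually_elim
    case (elim t)
    then have "g (- t) = - g t"
      by (intro exp_identities_imp_eq_minus[of "f t" c "g t" "f (- t)"]) auto
    with elim(1) show ?case
      by (simp add: mult.commute)
  qed
  then show ?thesis
    unfolding odd_near_0_def
    by (auto elim!: eventually_mono simp: reflection_imp_odd_factor)
qed

lemma odd_imp_functional_equation:
  fixes c :: complex
  assumes "isCont g 0" and "g 0 = 0" and "\<forall>\<^sub>F t in at 0. g t \<noteq> 0" and "c \<noteq> 0"
    and "odd_near_0 g" and "odd_near_0 (\<lambda>t. (exp (c * g t) - 1) * f t)"
  shows "\<forall>\<^sub>F t in nhds 0. f t * exp ((c - x) * g t) = f (- t) * exp (x * g (- t))"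
proof -
  have "\<forall>\<^sub>F t in nhds 0. norm (g t) < 2 * pi / norm c"
    using isCont_imp_eventually_norm_less[OF assms(1,2)] assms(4) by simp
  with assms(3,5,6) show ?thesis
    unfolding odd_near_0_def eventually_at_filter
  proof eventually_elim
    case (elim t)
    have "exp (c * g t) \<noteq> 1" if "t \<noteq> 0"
    proof
      assume "exp (c * g t) = 1"
      moreover have "norm (c * g t) < 2 * pi"
        using elim(4) assms(4) by (simp add: norm_mult field_simps)
      ultimately have "c * g t = 0"
        by (rule exp_eq_1_small_imp_eq_0)
      with elim(1) \<open>t \<noteq> 0\<close> assms(4) show False
        by simp
    qed
    with elim(2,3) assms(2) have "f (- t) = exp (c * g t) * f t"
      by (cases "t = 0") (auto intro: odd_factor_imp_reflection)
    with elim(2) show ?case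
      by (simp add: reflection_imp_functional_equation)
  qed
qed

theorem mainTheorem3:
  fixes g f :: "complex \<Rightarrow> complex" and \<phi> :: "nat \<Rightarrow> complex"
    and P :: "nat \<Rightarrow> complex poly" and a :: real
  assumes "g analytic_on {0}" and "g 0 = 0" and "deriv g 0 \<noteq> 0"
    and "\<forall>n. \<phi> n \<noteq> 0"
    and "a \<noteq> 0"
    and "appell_gen g \<phi> f P"
  shows "(\<forall>n x. poly (P n) (complex_of_real a - x) = (-1) ^ n * poly (P n) x)
     \<longleftrightarrow> (odd_near_0 g \<and> odd_near_0 (\<lambda>t. (exp (complex_of_real a * g t) - 1) * f t))"
proof -
  have g_cont: "isCont g 0"
    using assms(1) by (rule analytic_at_imp_isCont)
  have "(g has_field_derivative deriv g 0) (at 0)"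
    using assms(1) analytic_on_imp_differentiable_at DERIV_deriv_iff_field_differentiable by blast
  then have g_nonzero: "\<forall>\<^sub>F t in at 0. g t \<noteq> 0"
    using DERIV_nonzero_imp_eventually_nonzero assms(2,3) by blast
  have "f analytic_on {0}" and "f 0 \<noteq> 0"
    using assms(6) by (auto simp: appell_gen_def)
  then have f_nonzero: "\<forall>\<^sub>F t in nhds 0. f t \<noteq> 0"
    by (intro isCont_imp_eventually_nonzero analytic_at_imp_isCont)
  show ?thesis
    unfolding appell_reflection_iff_functional_equation[OF assms(6,4)]
    using functional_equation_imp_odd[OF g_cont assms(2) f_nonzero]
      odd_imp_functional_equation[OF g_cont assms(2) g_nonzero] assms(5)
    by auto
qed

end
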